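(* Let $\mathsf{P}$ be a program of the language $\mathcal{H}$ and let $\mathsf{Gr(P)}$ be its ground instantiation, regarded as a (possibly infinite) propositional program. Let $M$ be a three-valued (partial) interpretation of $\mathsf{Gr(P)}$ and let $\mathcal{M}$ be the Herbrand interpretation of $\mathsf{P}$ whose valuation function satisfies $v_{\mathcal{M}}(\mathsf{A}) = M(\mathsf{A})$ for every $\mathsf{A}\in U_{\mathsf{P},o}$. Then $\mathcal{M}$ is a Herbrand model of $\mathsf{P}$ if and only if $M$ is a model of $\mathsf{Gr(P)}$. Moreover, $\mathcal{M}$ is $\leq$-minimal (respectively, $\preceq$-minimal) if and only if $M$ is $\leq$-minimal (respectively, $\preceq$-minimal).
   Context: Types of $\mathcal{H}$: base types $\iota$ (individuals) and $o$ (booleans); functional types $\sigma ::= \iota \mid \iota\to\sigma$; predicate types $\pi ::= o \mid \rho\to\pi$; argument types $\rho ::= \iota \mid \pi$. The alphabet contains predicate variables and predicate constants of every predicate type, individual variables and individual constants of type $\iota$, function symbols of every functional type $\iota^n\to\iota$ ($n\ge1$), negation $\sim$, and equality $\approx$. Terms: variables and constants are terms of their type; if $\mathsf{f}$ is an $n$-ary function symbol and $\mathsf{E}_1,\dots,\mathsf{E}_n$ are terms of type $\iota$, then $(\mathsf{f}\,\mathsf{E}_1\cdots\mathsf{E}_n)$ is a term of type $\iota$; if $\mathsf{E}_1:\rho\to\pi$ and $\mathsf{E}_2:\rho$ are terms then $(\mathsf{E}_1\,\mathsf{E}_2)$ is a term of type $\pi$. Terms of type $o$ are atoms. Literals are atoms,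 expressions $(\mathsf{E}_1\approx\mathsf{E}_2)$ with $\mathsf{E}_1,\mathsf{E}_2$ terms of type $\iota$, and $(\sim\mathsf{E})$ with $\mathsf{E}$ an atom. A clause is $\mathsf{p}\,\mathsf{V}_1\cdots\mathsf{V}_n\leftarrow\mathsf{L}_1,\dots,\mathsf{L}_m$ where $\mathsf{p}$ is a predicate constant of type $\rho_1\to\cdots\to\rho_n\to o$, $\mathsf{V}_1,\dots,\mathsf{V}_n$ are distinct variables of types $\rho_1,\dots,\rho_n$, and the $\mathsf{L}_j$ are literals. A program is a finite set of clauses. For a program $\mathsf{P}$ and argument type $\rho$, $U_{\mathsf{P},\rho}$ is the set of ground (variable-free) terms of type $\rho$ built from the individual constants, function symbols and predicate constants occurring in $\mathsf{P}$; $U^+_{\mathsf{P},o}$ is $U_{\mathsf{P},o}$ together with all $(\mathsf{E}_1\approx\mathsf{E}_2)$ for $\mathsf{E}_1,\mathsf{E}_2\in U_{\mathsf{P},\iota}$ and all $(\sim\mathsf{E})$ for $\mathsf{E}\in U_{\mathsf{P},o}$. The ground instantiation $\mathsf{Gr(P)}$ is the set of all clauses obtained from clauses of $\mathsf{P}$ by substituting for every variable of the clause a term of $U_{\mathsf{P},\rho}$ of the same type $\rho$. It is regarded as a propositional program whose propositional variables are the ground atoms in $U_{\mathsf{P},o}$; a ground equality $(\mathsf{E}_1\approx\mathsf{E}_2)$ in a body is treated as the constant true if $\mathsf{E}_1,\mathsf{E}_2$ are syntactically identical and as the constant false otherwise. A three-valued interpretation of $\mathsf{Gr(P)}$ assigns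 to each ground atom a value in $\{\mathit{false},0,\mathit{true}\}$, extended to negations by $\sim$ swapping $\mathit{false}$ and $\mathit{true}$ and fixing $0$; it is a model if for every clause of $\mathsf{Gr(P)}$, the value of the head is $\ge$ the minimum of the values of the body literals, w.r.t. the truth order $\mathit{false}<0<\mathit{true}$ (empty body has value $\mathit{true}$). A (three-valued) Herbrand interpretation $I$ of $\mathsf{P}$ interprets each constant and function symbol by itself (so ground expressions denote themselves and application is syntactic application) and is determined by a valuation function $v_I:U^+_{\mathsf{P},o}\to\{\mathit{false},0,\mathit{true}\}$ such that $v_I(\mathsf{E}_1\approx\mathsf{E}_2)$ is $\mathit{true}$ if $\mathsf{E}_1=\mathsf{E}_2$ syntactically and $\mathit{false}$ otherwise, and $v_I(\sim\mathsf{E})$ is $\mathit{false},0,\mathit{true}$ when $v_I(\mathsf{E})$ is $\mathit{true},0,\mathit{false}$ respectively. A Herbrand state $s$ assigns to each variable of type $\rho$ an element of $U_{\mathsf{P},\rho}$; for an expression $\mathsf{E}$, $[\![\mathsf{E}]\!]_s$ is the ground expression obtained by replacing each variable $\mathsf{V}$ by $s(\mathsf{V})$. $I$ is a (Herbrand) model of $\mathsf{P}$ if for every clause $\mathsf{A}\leftarrow\mathsf{L}_1,\dots,\mathsf{L}_m$ of $\mathsf{P}$ and every state $s$, $v_I([\![\mathsf{A}]\!]_s)\ge\min\{v_I([\![\mathsf{L}_1]\!]_s),\dots,v_I([\![\mathsf{L}_m]\!]_s)\}$ in the truth order. Orderings: the truth order $\leq$ on values is $\mathit{false}\le0\le\mathit{true}$;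 the Fitting order $\preceq$ is $0\preceq\mathit{false}$, $0\preceq\mathit{true}$. For interpretations (of $\mathsf{P}$ or of $\mathsf{Gr(P)}$), $I\le J$ (resp. $I\preceq J$) iff the value of every ground atom $\mathsf{A}\in U_{\mathsf{P},o}$ under $I$ is $\le$ (resp. $\preceq$) its value under $J$. A model $M$ is $\le$-minimal (resp. $\preceq$-minimal) if there is no different model $N$ with $N\le M$ (resp. $N\preceq M$). *)

theory Defs
  imports Main
begin

datatype ty = Iota | Bool | Arr ty ty

fun pred_ty :: "ty \<Rightarrow> bool" and arg_ty :: "ty \<Rightarrow> bool" where
  "pred_ty Bool = True"
| "pred_ty (Arr r p) = (arg_ty r \<and> pred_ty p)"
| "pred_ty Iota = False"
| "arg_ty Iota = True"
| "arg_ty t = pred_ty t"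

text \<open>Variables and constants carry a name and a type; a variable (or constant) is
identified by the pair (name, type).  A function symbol is identified by its name and its arity
(the length of the argument list); FApp f es is the term (f E1 ... En).\<close>

datatype 'a trm =
    V 'a ty
  | C 'a ty
  | FApp 'a "'a trm list"
  | App "'a trm" "'a trm"

inductive wt :: "'a trm \<Rightarrow> ty \<Rightarrow> bool" where
  wt_V: "arg_ty t \<Longrightarrow> wt (V x t) t"
| wt_C: "arg_ty t \<Longrightarrow> wt (C c t) t"
| wt_F: "es \<noteq> [] \<Longrightarrow> (\<forall>e\<in>set es. wt e Iota) \<Longrightarrow> wt (FApp f es) Iota"
| wt_App: "pred_ty (Arr r p) \<Longrightarrow> wt e1 (Arr r p) \<Longrightarrow> wt e2 r \<Longrightarrow> wt (App e1 e2) p"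

fun tvars :: "'a trm \<Rightarrow> ('a \<times> ty) set" where
  "tvars (V x t) = {(x, t)}"
| "tvars (C c t) = {}"
| "tvars (FApp f es) = (\<Union>e\<in>set es. tvars e)"
| "tvars (App e1 e2) = tvars e1 \<union> tvars e2"

fun tconsts :: "'a trm \<Rightarrow> ('a \<times> ty) set" where
  "tconsts (V x t) = {}"
| "tconsts (C c t) = {(c, t)}"
| "tconsts (FApp f es) = (\<Union>e\<in>set es. tconsts e)"
| "tconsts (App e1 e2) = tconsts e1 \<union> tconsts e2"

fun tfuns :: "'a trm \<Rightarrow> ('a \<times> nat) set" where
  "tfuns (V x t) = {}"
| "tfuns (C c t) = {}"
| "tfuns (FApp f es) = insert (f, length es) (\<Union>e\<in>set es. tfuns e)"
| "tfuns (App e1 e2) = tfuns e1 \<union> tfuns e2"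

fun subst :: "('a \<times> ty \<Rightarrow> 'a trm) \<Rightarrow> 'a trm \<Rightarrow> 'a trm" where
  "subst s (V x t) = s (x, t)"
| "subst s (C c t) = C c t"
| "subst s (FApp f es) = FApp f (map (subst s) es)"
| "subst s (App e1 e2) = App (subst s e1) (subst s e2)"

datatype 'a lit = Pos "'a trm" | Eq "'a trm" "'a trm" | Neg "'a trm"

fun wf_lit :: "'a lit \<Rightarrow> bool" where
  "wf_lit (Pos e) = wt e Bool"
| "wf_lit (Eq e1 e2) = (wt e1 Iota \<and> wt e2 Iota)"
| "wf_lit (Neg e) = wt e Bool"

fun lit_map :: "('a trm \<Rightarrow> 'a trm) \<Rightarrow> 'a lit \<Rightarrow> 'a lit" where
  "lit_map g (Pos e) = Pos (g e)"
| "lit_map g (Eq e1 e2) = Eq (g e1) (g e2)"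
| "lit_map g (Neg e) = Neg (g e)"

fun lit_trms :: "'a lit \<Rightarrow> 'a trm set" where
  "lit_trms (Pos e) = {e}"
| "lit_trms (Eq e1 e2) = {e1, e2}"
| "lit_trms (Neg e) = {e}"

text \<open>A clause  p V1 ... Vn <- L1, ..., Lm : predicate constant name p with its type,
the list of head variables (name, type), and the list of body literals.\<close>

datatype 'a clause = Clause 'a ty "('a \<times> ty) list" "'a lit list"

fun head :: "'a clause \<Rightarrow> 'a trm" where
  "head (Clause p t vs body) = foldl App (C p t) (map (\<lambda>(x, r). V x r) vs)"

fun body :: "'a clause \<Rightarrow> 'a lit list" where
  "body (Clause p t vs bd) = bd"

fun wf_clause :: "'a clause \<Rightarrow> bool" where
  "wf_clause (Clause p t vs bd) =
     (pred_ty t \<and> t = foldr Arr (map snd vs) Bool \<and> distinct vs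
      \<and> (\<forall>v\<in>set vs. arg_ty (snd v)) \<and> (\<forall>L\<in>set bd. wf_lit L))"

definition program :: "'a clause set \<Rightarrow> bool" where
  "program P \<longleftrightarrow> finite P \<and> (\<forall>c\<in>P. wf_clause c)"

definition clause_trms :: "'a clause \<Rightarrow> 'a trm set" where
  "clause_trms c = insert (head c) (\<Union>L\<in>set (body c). lit_trms L)"

definition clause_vars :: "'a clause \<Rightarrow> ('a \<times> ty) set" where
  "clause_vars c = (\<Union>e\<in>clause_trms c. tvars e)"

definition prog_consts :: "'a clause set \<Rightarrow> ('a \<times> ty) set" where
  "prog_consts P = (\<Union>c\<in>P. \<Union>e\<in>clause_trms c. tconsts e)"

definition prog_funs :: "'a clause set \<Rightarrow> ('a \<times> nat) set" where
  "prog_funs P = (\<Union>c\<in>P. \<Union>e\<in>clause_trms c. tfuns e)"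

definition U :: "'a clause set \<Rightarrow> ty \<Rightarrow> 'a trm set" where
  "U P r = {e. wt e r \<and> tvars e = {} \<and> tconsts e \<subseteq> prog_consts P \<and> tfuns e \<subseteq> prog_funs P}"

datatype tv = FF | ZZ | TT

fun rank :: "tv \<Rightarrow> nat" where
  "rank FF = 0" | "rank ZZ = 1" | "rank TT = 2"

definition tle :: "tv \<Rightarrow> tv \<Rightarrow> bool" where
  "tle a b \<longleftrightarrow> rank a \<le> rank b"

definition fle :: "tv \<Rightarrow> tv \<Rightarrow> bool" where
  "fle a b \<longleftrightarrow> a = ZZ \<or> a = b"

definition tmin :: "tv \<Rightarrow> tv \<Rightarrow> tv" where
  "tmin a b = (if tle a b then a else b)"

fun tneg :: "tv \<Rightarrow> tv" where
  "tneg FF = TT" | "tneg ZZ = ZZ" | "tneg TT = FF"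

definition conj_list :: "tv list \<Rightarrow> tv" where
  "conj_list xs = foldr tmin xs TT"

text \<open>An interpretation (of Gr(P), or the valuation of a Herbrand interpretation on
ground atoms) is a function on terms; only its values on U_{P,o} matter.
Its extension to ground literals (U^+_{P,o}):\<close>

fun lval :: "('a trm \<Rightarrow> tv) \<Rightarrow> 'a lit \<Rightarrow> tv" where
  "lval M (Pos e) = M e"
| "lval M (Eq e1 e2) = (if e1 = e2 then TT else FF)"
| "lval M (Neg e) = tneg (M e)"

definition ground_subst :: "'a clause set \<Rightarrow> 'a clause \<Rightarrow> ('a \<times> ty \<Rightarrow> 'a trm) \<Rightarrow> bool" where
  "ground_subst P c s \<longleftrightarrow> (\<forall>(x, t)\<in>clause_vars c. s (x, t) \<in> U P t)"

text \<open>Gr(P) as a set of ground (propositional) clauses: (head atom, body literals).\<close>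
definition Gr :: "'a clause set \<Rightarrow> ('a trm \<times> 'a lit list) set" where
  "Gr P = {(subst s (head c), map (lit_map (subst s)) (body c)) | c s. c \<in> P \<and> ground_subst P c s}"

definition gr_model :: "'a clause set \<Rightarrow> ('a trm \<Rightarrow> tv) \<Rightarrow> bool" where
  "gr_model P M \<longleftrightarrow> (\<forall>(h, bd)\<in>Gr P. tle (conj_list (map (lval M) bd)) (M h))"

text \<open>Herbrand states (restricted to the variables of the clause at hand).\<close>
definition herbrand_state :: "'a clause set \<Rightarrow> 'a clause \<Rightarrow> ('a \<times> ty \<Rightarrow> 'a trm) \<Rightarrow> bool" where
  "herbrand_state P c s \<longleftrightarrow> (\<forall>(x, t)\<in>clause_vars c. s (x, t) \<in> U P t)"

definition herbrand_model :: "'a clause set \<Rightarrow> ('a trm \<Rightarrow> tv) \<Rightarrow> bool" where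
  "herbrand_model P v \<longleftrightarrow>
     (\<forall>c\<in>P. \<forall>s. herbrand_state P c s \<longrightarrow>
        tle (conj_list (map (\<lambda>L. lval v (lit_map (subst s) L)) (body c))) (v (subst s (head c))))"

definition int_le :: "'a clause set \<Rightarrow> ('a trm \<Rightarrow> tv) \<Rightarrow> ('a trm \<Rightarrow> tv) \<Rightarrow> bool" where
  "int_le P N M \<longleftrightarrow> (\<forall>A\<in>U P Bool. tle (N A) (M A))"

definition int_fle :: "'a clause set \<Rightarrow> ('a trm \<Rightarrow> tv) \<Rightarrow> ('a trm \<Rightarrow> tv) \<Rightarrow> bool" where
  "int_fle P N M \<longleftrightarrow> (\<forall>A\<in>U P Bool. fle (N A) (M A))"

definition int_diff :: "'a clause set \<Rightarrow> ('a trm \<Rightarrow> tv) \<Rightarrow> ('a trm \<Rightarrow> tv) \<Rightarrow> bool" where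
  "int_diff P N M \<longleftrightarrow> (\<exists>A\<in>U P Bool. N A \<noteq> M A)"

definition minimal_wrt ::
  "(('a trm \<Rightarrow> tv) \<Rightarrow> bool) \<Rightarrow> (('a trm \<Rightarrow> tv) \<Rightarrow> ('a trm \<Rightarrow> tv) \<Rightarrow> bool)
   \<Rightarrow> (('a trm \<Rightarrow> tv) \<Rightarrow> ('a trm \<Rightarrow> tv) \<Rightarrow> bool) \<Rightarrow> ('a trm \<Rightarrow> tv) \<Rightarrow> bool" where
  "minimal_wrt Mod ord diff M \<longleftrightarrow> Mod M \<and> \<not> (\<exists>N. Mod N \<and> diff N M \<and> ord N M)"

end

theory Submission
  imports Defs
begin

(* A Herbrand state of P, restricted to the variables of a clause, is exactly a
   substitution used to build Gr(P), and evaluating a clause body under the state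
   is evaluating the corresponding ground body.  So the two model notions coincide
   as predicates on interpretations; as both orders and the difference relation only
   inspect the atoms of U_{P,o}, minimality is then the same statement on both sides. *)

lemma ground_instance_in_Gr:
  assumes "c \<in> P" and "herbrand_state P c s"
  shows "(subst s (head c), map (lit_map (subst s)) (body c)) \<in> Gr P"
  using assms unfolding Gr_def herbrand_state_def ground_subst_def by blast

lemma herbrand_model_eq_gr_model: "herbrand_model P = gr_model P"
proof (intro ext iffI)
  fix M
  assume herbrand: "herbrand_model P M"
  show "gr_model P M"
    unfolding gr_model_def Gr_def
  proof clarify
    fix c s
    assume "c \<in> P" and "ground_subst P c s"
    then show "tle (conj_list (map (lval M) (map (lit_map (subst s)) (body c))))
                   (M (subst s (head c)))"
      using herbrand
      unfolding herbrand_model_def herbrand_state_def ground_subst_def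
      by (simp add: comp_def)
  qed
next
  fix M
  assume ground: "gr_model P M"
  show "herbrand_model P M"
    unfolding herbrand_model_def
  proof (intro ballI allI impI)
    fix c s
    assume "c \<in> P" and "herbrand_state P c s"
    then have "(subst s (head c), map (lit_map (subst s)) (body c)) \<in> Gr P"
      by (rule ground_instance_in_Gr)
    then show "tle (conj_list (map (\<lambda>L. lval M (lit_map (subst s) L)) (body c)))
                   (M (subst s (head c)))"
      using ground unfolding gr_model_def by (fastforce simp: comp_def)
  qed
qed

theorem theorem1:
  fixes P :: "'a clause set" and M :: "'a trm \<Rightarrow> tv"
  assumes "program P"
  shows "(herbrand_model P M \<longleftrightarrow> gr_model P M)
    \<and> (minimal_wrt (herbrand_model P) (int_le P) (int_diff P) M
         \<longleftrightarrow> minimal_wrt (gr_model P) (int_le P) (int_diff P) M)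
    \<and> (minimal_wrt (herbrand_model P) (int_fle P) (int_diff P) M
         \<longleftrightarrow> minimal_wrt (gr_model P) (int_fle P) (int_diff P) M)"
  by (simp add: herbrand_model_eq_gr_model)

end
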